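(* Assume the L-smoothness assumption (with $L>0$), let $x^\star$ be a minimizer of $f$, $f^\star=f(x^\star)$, assume $\sigma_f^2<\infty$, and suppose $\gamma_b\le\frac1{20L\tau}$. For every $t\ge0$ let $s(t)$ be the largest multiple of $\tau$ with $s(t)\le t$. Then the FedSPS iterates satisfy $$\mathbb E R_t\le\frac1{3L\tau}\sum_{j=s(t)}^{t-1}\mathbb E[f(\bar x_j)-f^\star]+64L\gamma_b^2\tau\sum_{j=s(t)}^{t-1}\sigma_f^2,$$ where $R_t:=\frac1n\sum_{i=1}^n\|\bar x_t-x_t^i\|^2$.
   Context: Setting: integers $n\ge1$, $d\ge1$, $\tau\ge1$. For each $i\in[n]$, $\mathcal D_i$ is a probability distribution on $\Omega_i$, $F_i:\mathbb R^d\times\Omega_i\to\mathbb R$ with $F_i(\cdot,\xi)$ differentiable for $\xi\in\operatorname{supp}(\mathcal D_i)$; $f_i(x):=\mathbb E_{\xi\sim\mathcal D_i}F_i(x,\xi)$, $\mathbb E\nabla F_i(x,\xi)=\nabla f_i(x)$, $f:=\frac1n\sum_if_i$. $F_i^\star:=\inf_{\xi\in\operatorname{supp}(\mathcal D_i),x}F_i(x,\xi)$ and $\ell_i^\star\le F_i^\star$ are given reals. FedSPS with parameters $c,\gamma_b>0$: $x_0^i=x_0$; at each $t$, client $i$ draws $\xi_t^i\sim\mathcal D_i$ independently of everything else, sets $g_t^i:=\nabla F_i(x_t^i,\xi_t^i)$, $\gamma_t^i:=\min\{\frac{F_i(x_t^i,\xi_t^i)-\ell_i^\star}{c\|g_t^i\|^2},\gamma_b\}$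 (first term $+\infty$ if $g_t^i=0$); if $t+1$ is a multiple of $\tau$, $x_{t+1}^i:=\frac1n\sum_j(x_t^j-\gamma_t^jg_t^j)$ for all $i$, else $x_{t+1}^i:=x_t^i-\gamma_t^ig_t^i$. $\bar x_t:=\frac1n\sum_ix_t^i$. L-smoothness assumption: $\|\nabla F_i(y,\xi)-\nabla F_i(x,\xi)\|\le L\|x-y\|$ for all $i$, $\xi\in\operatorname{supp}(\mathcal D_i)$, $x,y$. $\sigma_f^2:=\frac1n\sum_i(f_i(x^\star)-\ell_i^\star)$. *)

theory Defs
  imports "HOL-Probability.Probability"
begin

text \<open>Clients are indexed by 0..n-1. F i x xi is the stochastic loss,
  G i x xi its gradient in x, ell i the lower bound ell_i^star.
  A sample path xi maps (t,i) to the sample drawn by client i at time t.\<close>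

definition sps_step ::
  "(nat \<Rightarrow> 'a::real_inner \<Rightarrow> 'w \<Rightarrow> real) \<Rightarrow> (nat \<Rightarrow> 'a \<Rightarrow> 'w \<Rightarrow> 'a) \<Rightarrow> (nat \<Rightarrow> real)
   \<Rightarrow> real \<Rightarrow> real \<Rightarrow> nat \<Rightarrow> 'a \<Rightarrow> 'w \<Rightarrow> real" where
  "sps_step F G ell c gb i x xi =
     (if G i x xi = 0 then gb
      else min ((F i x xi - ell i) / (c * (norm (G i x xi))\<^sup>2)) gb)"

fun fedsps ::
  "nat \<Rightarrow> nat \<Rightarrow> (nat \<Rightarrow> 'a::real_inner \<Rightarrow> 'w \<Rightarrow> real) \<Rightarrow> (nat \<Rightarrow> 'a \<Rightarrow> 'w \<Rightarrow> 'a)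
   \<Rightarrow> (nat \<Rightarrow> real) \<Rightarrow> real \<Rightarrow> real \<Rightarrow> 'a \<Rightarrow> (nat \<times> nat \<Rightarrow> 'w) \<Rightarrow> nat \<Rightarrow> nat \<Rightarrow> 'a" where
  "fedsps n tau F G ell c gb x0 xi 0 = (\<lambda>i. x0)"
| "fedsps n tau F G ell c gb x0 xi (Suc t) =
     (let x = fedsps n tau F G ell c gb x0 xi t;
          u = (\<lambda>i. x i - sps_step F G ell c gb i (x i) (xi (t, i)) *\<^sub>R G i (x i) (xi (t, i)))
      in if tau dvd Suc t then (\<lambda>i. (1 / real n) *\<^sub>R (\<Sum>j<n. u j)) else u)"

definition avg :: "nat \<Rightarrow> (nat \<Rightarrow> 'a::real_vector) \<Rightarrow> 'a" where
  "avg n x = (1 / real n) *\<^sub>R (\<Sum>i<n. x i)"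

definition consensus_dist :: "nat \<Rightarrow> (nat \<Rightarrow> 'a::real_normed_vector) \<Rightarrow> real" where
  "consensus_dist n x = (1 / real n) * (\<Sum>i<n. (norm (avg n x - x i))\<^sup>2)"

definition local_obj :: "(nat \<Rightarrow> 'w measure) \<Rightarrow> (nat \<Rightarrow> 'a \<Rightarrow> 'w \<Rightarrow> real) \<Rightarrow> nat \<Rightarrow> 'a \<Rightarrow> real" where
  "local_obj D F i x = (\<integral>xi. F i x xi \<partial>D i)"

definition global_obj :: "nat \<Rightarrow> (nat \<Rightarrow> 'w measure) \<Rightarrow> (nat \<Rightarrow> 'a \<Rightarrow> 'w \<Rightarrow> real) \<Rightarrow> 'a \<Rightarrow> real" where
  "global_obj n D F x = (1 / real n) * (\<Sum>i<n. local_obj D F i x)"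

definition sigma_f2 :: "nat \<Rightarrow> (nat \<Rightarrow> 'w measure) \<Rightarrow> (nat \<Rightarrow> 'a \<Rightarrow> 'w \<Rightarrow> real) \<Rightarrow> (nat \<Rightarrow> real) \<Rightarrow> 'a \<Rightarrow> real" where
  "sigma_f2 n D F ell xstar = (1 / real n) * (\<Sum>i<n. local_obj D F i xstar - ell i)"

definition sample_space :: "nat \<Rightarrow> (nat \<Rightarrow> 'w measure) \<Rightarrow> (nat \<times> nat \<Rightarrow> 'w) measure" where
  "sample_space n D = PiM (UNIV \<times> {..<n}) (\<lambda>(t, i). D i)"

definition last_sync :: "nat \<Rightarrow> nat \<Rightarrow> nat" where
  "last_sync tau t = (t div tau) * tau"

end

theory Submission
  imports Defs
begin

text \<open>Between two synchronisations each client leaves the common point by at most \<open>\<tau>\<close> SPS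
  steps of length at most \<open>\<gamma>\<^sub>b \<parallel>\<nabla>F\<^sub>i\<parallel>\<close>, and smoothness gives
  \<open>\<parallel>\<nabla>F\<^sub>i(x,\<xi>)\<parallel>\<^sup>2 \<le> 2L (F\<^sub>i(x,\<xi>) - \<ell>\<^sub>i)\<close>. Moving the evaluation point from the client iterate
  \<open>x\<^sub>j\<^sup>i\<close> to the average \<open>x\<^sub>j\<close> costs \<open>L \<parallel>x\<^sub>j\<^sup>i - x\<^sub>j\<parallel>\<^sup>2\<close>, so pathwise \<open>R\<^sub>t\<close> is bounded by the sampled
  suboptimalities at the averages plus \<open>2L\<^sup>2\<gamma>\<^sub>b\<^sup>2\<tau> \<Sum> R\<^sub>j\<close>. The fresh sample \<open>\<xi>\<^sub>j\<^sup>i\<close> is independent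
  of \<open>x\<^sub>j\<close>, so in expectation the sampled suboptimality becomes
  \<open>f\<^sub>i(x\<^sub>j) - \<ell>\<^sub>i\<close>, which averages to \<open>f(x\<^sub>j) - f\<^sup>\<star> + \<sigma>\<^sub>f\<^sup>2\<close>. The step size bound makes the feedback
  coefficient \<open>2L\<^sup>2\<gamma>\<^sub>b\<^sup>2\<tau>\<^sup>2\<close> at most \<open>1/2\<close>, so unrolling the recursion inside a window at most
  doubles the forcing term.\<close>

lemma descent_lemma:
  fixes \<phi> :: "'a::real_inner \<Rightarrow> real" and g :: "'a \<Rightarrow> 'a"
  assumes deriv: "\<And>x. (\<phi> has_derivative (\<lambda>h. g x \<bullet> h)) (at x)"
    and lipschitz: "\<And>x y. norm (g y - g x) \<le> L * norm (x - y)"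
  shows "\<phi> y \<le> \<phi> x + g x \<bullet> (y - x) + L / 2 * (norm (y - x))\<^sup>2"
proof -
  define d where "d = y - x"
  define h where "h s = \<phi> (x + s *\<^sub>R d) - s * (g x \<bullet> d) - L / 2 * s\<^sup>2 * (norm d)\<^sup>2" for s :: real
  have "h 1 \<le> h 0"
  proof (rule DERIV_nonpos_imp_nonincreasing[of 0 1 h])
    fix s :: real assume s: "0 \<le> s" "s \<le> 1"
    have "((\<lambda>s. \<phi> (x + s *\<^sub>R d)) has_derivative (\<lambda>r. g (x + s *\<^sub>R d) \<bullet> (r *\<^sub>R d))) (at s)"
      by (rule has_derivative_compose[OF _ deriv]) (auto intro!: derivative_eq_intros)
    then have line: "((\<lambda>s. \<phi> (x + s *\<^sub>R d)) has_real_derivative g (x + s *\<^sub>R d) \<bullet> d) (at s)"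
      by (simp add: has_field_derivative_def mult_commute_abs)
    have "(h has_real_derivative g (x + s *\<^sub>R d) \<bullet> d - g x \<bullet> d - L * s * (norm d)\<^sup>2) (at s)"
      unfolding h_def by (auto intro!: derivative_eq_intros line)
    moreover have "(g (x + s *\<^sub>R d) - g x) \<bullet> d \<le> L * s * (norm d)\<^sup>2"
    proof -
      have "(g (x + s *\<^sub>R d) - g x) \<bullet> d \<le> norm (g (x + s *\<^sub>R d) - g x) * norm d"
        by (rule norm_cauchy_schwarz)
      also have "\<dots> \<le> L * norm (x - (x + s *\<^sub>R d)) * norm d"
        by (intro mult_right_mono lipschitz) auto
      finally show ?thesis using s by (simp add: power2_eq_square mult.assoc)
    qed
    ultimately show "\<exists>y. (h has_real_derivative y) (at s) \<and> y \<le> 0"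
      by (auto simp: inner_diff_left)
  qed simp
  then show ?thesis by (simp add: h_def d_def)
qed

lemma gradient_norm_sq_le:
  fixes \<phi> :: "'a::real_inner \<Rightarrow> real" and g :: "'a \<Rightarrow> 'a"
  assumes deriv: "\<And>x. (\<phi> has_derivative (\<lambda>h. g x \<bullet> h)) (at x)"
    and lipschitz: "\<And>x y. norm (g y - g x) \<le> L * norm (x - y)"
    and lower: "\<And>x. l \<le> \<phi> x" and "L > 0"
  shows "(norm (g x))\<^sup>2 \<le> 2 * L * (\<phi> x - l)"
proof -
  define y where "y = x - (1 / L) *\<^sub>R g x"
  have "l \<le> \<phi> y" by (rule lower)
  also have "\<dots> \<le> \<phi> x + g x \<bullet> (y - x) + L / 2 * (norm (y - x))\<^sup>2"
    by (rule descent_lemma[OF deriv lipschitz])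
  also have "\<dots> = \<phi> x - (norm (g x))\<^sup>2 / (2 * L)"
    using \<open>L > 0\<close> by (simp add: y_def power2_eq_square field_simps flip: power2_norm_eq_inner)
  finally show ?thesis using \<open>L > 0\<close> by (simp add: field_simps)
qed

lemma suboptimality_shift_le:
  fixes \<phi> :: "'a::real_inner \<Rightarrow> real" and g :: "'a \<Rightarrow> 'a"
  assumes deriv: "\<And>x. (\<phi> has_derivative (\<lambda>h. g x \<bullet> h)) (at x)"
    and lipschitz: "\<And>x y. norm (g y - g x) \<le> L * norm (x - y)"
    and lower: "\<And>x. l \<le> \<phi> x" and "L > 0"
  shows "\<phi> y - l \<le> 2 * (\<phi> x - l) + L * (norm (y - x))\<^sup>2"
proof -
  have "g x \<bullet> (y - x) \<le> norm (g x) * norm (y - x)"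
    by (rule norm_cauchy_schwarz)
  also have "\<dots> \<le> (norm (g x))\<^sup>2 / (2 * L) + L / 2 * (norm (y - x))\<^sup>2"
  proof -
    have "0 \<le> (norm (g x) - L * norm (y - x))\<^sup>2 / (2 * L)"
      using \<open>L > 0\<close> by simp
    then show ?thesis using \<open>L > 0\<close> by (simp add: power2_eq_square field_simps)
  qed
  also have "(norm (g x))\<^sup>2 / (2 * L) \<le> \<phi> x - l"
    using gradient_norm_sq_le[OF deriv lipschitz lower \<open>L > 0\<close>] \<open>L > 0\<close> by (simp add: field_simps)
  finally show ?thesis
    using descent_lemma[OF deriv lipschitz, of y x] by simp
qed

definition regular_sample ::
  "(nat \<Rightarrow> 'a::real_inner \<Rightarrow> 'w \<Rightarrow> real) \<Rightarrow> (nat \<Rightarrow> 'a \<Rightarrow> 'w \<Rightarrow> 'a) \<Rightarrow> (nat \<Rightarrow> real)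
   \<Rightarrow> real \<Rightarrow> nat \<Rightarrow> 'w \<Rightarrow> bool" where
  "regular_sample F G ell L i xi \<longleftrightarrow>
     (\<forall>x. ell i \<le> F i x xi) \<and> (\<forall>x y. norm (G i y xi - G i x xi) \<le> L * norm (x - y)) \<and>
     (\<forall>x. ((\<lambda>y. F i y xi) has_derivative (\<lambda>h. G i x xi \<bullet> h)) (at x))"

definition sps_update ::
  "(nat \<Rightarrow> 'a::real_inner \<Rightarrow> 'w \<Rightarrow> real) \<Rightarrow> (nat \<Rightarrow> 'a \<Rightarrow> 'w \<Rightarrow> 'a) \<Rightarrow> (nat \<Rightarrow> real)
   \<Rightarrow> real \<Rightarrow> real \<Rightarrow> nat \<Rightarrow> 'a \<Rightarrow> 'w \<Rightarrow> 'a" where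
  "sps_update F G ell c gb i x xi = sps_step F G ell c gb i x xi *\<^sub>R G i x xi"

lemma sps_step_nonneg:
  assumes "\<forall>x. ell i \<le> F i x xi" "c > 0" "gb > 0"
  shows "0 \<le> sps_step F G ell c gb i x xi"
  using assms unfolding sps_step_def by (auto intro!: divide_nonneg_pos)

lemma sps_step_le: "sps_step F G ell c gb i x xi \<le> gb"
  unfolding sps_step_def by simp

lemma norm_sps_update_sq_le:
  assumes regular: "regular_sample F G ell L i xi" and "c > 0" "gb > 0" "L > 0"
  shows "(norm (sps_update F G ell c gb i x xi))\<^sup>2
           \<le> 2 * L * gb\<^sup>2 * (2 * (F i y xi - ell i) + L * (norm (x - y))\<^sup>2)"
proof -
  let ?\<gamma> = "sps_step F G ell c gb i x xi"
  note smooth = regular[unfolded regular_sample_def]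
  have "0 \<le> ?\<gamma>" using sps_step_nonneg[of ell i F xi c gb] smooth \<open>c > 0\<close> \<open>gb > 0\<close> by simp
  then have "?\<gamma>\<^sup>2 \<le> gb\<^sup>2" by (simp add: power_mono sps_step_le)
  then have "(norm (sps_update F G ell c gb i x xi))\<^sup>2 \<le> gb\<^sup>2 * (norm (G i x xi))\<^sup>2"
    by (simp add: sps_update_def power_mult_distrib mult_right_mono)
  also have "\<dots> \<le> gb\<^sup>2 * (2 * L * (F i x xi - ell i))"
    using smooth \<open>L > 0\<close>
    by (intro mult_left_mono gradient_norm_sq_le[where \<phi>="\<lambda>y. F i y xi"]) auto
  also have "\<dots> \<le> gb\<^sup>2 * (2 * L * (2 * (F i y xi - ell i) + L * (norm (x - y))\<^sup>2))"
    using smooth \<open>L > 0\<close>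
    by (intro mult_left_mono suboptimality_shift_le[where g="\<lambda>y. G i y xi"]) auto
  finally show ?thesis by (simp add: algebra_simps)
qed

lemma fedsps_Suc_local:
  "\<not> tau dvd Suc t \<Longrightarrow> fedsps n tau F G ell c gb x0 xi (Suc t) i =
     fedsps n tau F G ell c gb x0 xi t i
       - sps_update F G ell c gb i (fedsps n tau F G ell c gb x0 xi t i) (xi (t, i))"
  by (simp add: sps_update_def Let_def)

lemma fedsps_Suc_sync:
  "tau dvd Suc t \<Longrightarrow> fedsps n tau F G ell c gb x0 xi (Suc t) i =
     (1 / real n) *\<^sub>R (\<Sum>j<n. fedsps n tau F G ell c gb x0 xi t j
       - sps_update F G ell c gb j (fedsps n tau F G ell c gb x0 xi t j) (xi (t, j)))"
  by (simp add: sps_update_def Let_def)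

lemma fedsps_cong_samples:
  assumes "\<forall>s<t. \<forall>i<n. xi (s, i) = xi' (s, i)" "k < n"
  shows "fedsps n tau F G ell c gb x0 xi t k = fedsps n tau F G ell c gb x0 xi' t k"
  using assms
proof (induction t arbitrary: k)
  case (Suc t)
  then have IH: "\<And>k. k < n \<Longrightarrow> fedsps n tau F G ell c gb x0 xi t k = fedsps n tau F G ell c gb x0 xi' t k"
    by auto
  show ?case
  proof (cases "tau dvd Suc t")
    case True
    then show ?thesis unfolding fedsps_Suc_sync[OF True]
      using IH Suc.prems by (intro arg_cong[where f="\<lambda>v. _ *\<^sub>R v"] sum.cong) auto
  next
    case False
    then show ?thesis unfolding fedsps_Suc_local[OF False] using IH Suc.prems by simp
  qed
qed simp

lemma avg_fedsps_cong_samples: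
  assumes "\<forall>s<t. \<forall>i<n. xi (s, i) = xi' (s, i)"
  shows "avg n (fedsps n tau F G ell c gb x0 xi t) = avg n (fedsps n tau F G ell c gb x0 xi' t)"
  unfolding avg_def using fedsps_cong_samples[OF assms] by (metis (no_types, lifting) lessThan_iff sum.cong)

lemma fedsps_at_sync:
  assumes "tau dvd s"
  shows "fedsps n tau F G ell c gb x0 xi s i = fedsps n tau F G ell c gb x0 xi s 0"
  using assms by (cases s) (simp_all only: fedsps_Suc_sync fedsps.simps(1))

lemma fedsps_local_steps:
  assumes "tau dvd s" "d < tau"
  shows "fedsps n tau F G ell c gb x0 xi (s + d) i = fedsps n tau F G ell c gb x0 xi s i
     - (\<Sum>j\<in>{s..<s + d}. sps_update F G ell c gb i (fedsps n tau F G ell c gb x0 xi j i) (xi (j, i)))"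
  using assms(2)
proof (induction d)
  case (Suc d)
  have "\<not> tau dvd Suc d" using Suc.prems by (auto dest: dvd_imp_le)
  then have "\<not> tau dvd Suc (s + d)" using assms(1) by (metis add_Suc_right dvd_add_right_iff)
  then show ?case using Suc by (simp add: fedsps_Suc_local del: fedsps.simps)
qed simp

lemma consensus_dist_nonneg: "0 \<le> consensus_dist n x"
  unfolding consensus_dist_def by (simp add: sum_nonneg)

lemma consensus_dist_le_mean_sq_dist:
  fixes x :: "nat \<Rightarrow> 'a::real_inner"
  assumes "n \<ge> 1"
  shows "consensus_dist n x \<le> (1 / real n) * (\<Sum>i<n. (norm (x i - y))\<^sup>2)"
proof -
  define a where "a = avg n x"
  have centred: "(\<Sum>i<n. x i - a) = 0"
    using assms by (simp add: a_def avg_def sum_subtractf sum_constant_scaleR)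
  have "(norm (x i - y))\<^sup>2 = (norm (x i - a))\<^sup>2 + 2 * ((x i - a) \<bullet> (a - y)) + (norm (a - y))\<^sup>2" for i
    by (simp add: power2_norm_eq_inner inner_commute algebra_simps)
  then have "(\<Sum>i<n. (norm (x i - y))\<^sup>2)
      = (\<Sum>i<n. (norm (x i - a))\<^sup>2) + 2 * ((\<Sum>i<n. x i - a) \<bullet> (a - y)) + real n * (norm (a - y))\<^sup>2"
    by (simp add: sum.distrib sum_distrib_left inner_sum_left)
  then have "(\<Sum>i<n. (norm (a - x i))\<^sup>2) \<le> (\<Sum>i<n. (norm (x i - y))\<^sup>2)"
    using centred by (simp add: norm_minus_commute)
  then show ?thesis
    unfolding consensus_dist_def a_def[symmetric] by (simp add: divide_right_mono)
qed

lemma last_sync_le: "last_sync tau t \<le> t"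
  by (simp add: last_sync_def)

lemma dvd_last_sync: "tau dvd last_sync tau t"
  by (simp add: last_sync_def)

lemma diff_last_sync_less: "tau \<ge> 1 \<Longrightarrow> t - last_sync tau t < tau"
  by (simp add: last_sync_def minus_div_mult_eq_mod)

lemma last_sync_eq:
  assumes "j \<in> {last_sync tau t..<t}"
  shows "last_sync tau j = last_sync tau t"
proof -
  have "t div tau \<le> j div tau"
    using assms div_le_mono[of "t div tau * tau" j tau] by (cases "tau = 0") (auto simp: last_sync_def)
  moreover have "j div tau \<le> t div tau" using assms by (intro div_le_mono) auto
  ultimately show ?thesis by (simp add: last_sync_def)
qed

lemma norm_fedsps_drift_sq_le:
  assumes "tau \<ge> 1"
  shows "(norm (fedsps n tau F G ell c gb x0 xi t i - fedsps n tau F G ell c gb x0 xi (last_sync tau t) 0))\<^sup>2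
    \<le> real tau * (\<Sum>j\<in>{last_sync tau t..<t}.
          (norm (sps_update F G ell c gb i (fedsps n tau F G ell c gb x0 xi j i) (xi (j, i))))\<^sup>2)"
proof -
  define s where "s = last_sync tau t"
  let ?x = "fedsps n tau F G ell c gb x0 xi"
  let ?v = "\<lambda>j. sps_update F G ell c gb i (?x j i) (xi (j, i))"
  have window: "t = s + (t - s)" "t - s < tau" "card {s..<t} = t - s"
    using last_sync_le diff_last_sync_less[OF assms] by (auto simp: s_def)
  have "?x (s + (t - s)) i = ?x s i - (\<Sum>j\<in>{s..<s + (t - s)}. ?v j)"
    using window(2) by (intro fedsps_local_steps) (auto simp: s_def dvd_last_sync)
  moreover have "?x s i = ?x s 0"
    by (rule fedsps_at_sync) (simp add: s_def dvd_last_sync)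
  ultimately have "?x t i - ?x s 0 = - (\<Sum>j\<in>{s..<t}. ?v j)"
    by (simp only: window(1)[symmetric]) simp
  then have "(norm (?x t i - ?x s 0))\<^sup>2 \<le> (\<Sum>j\<in>{s..<t}. norm (?v j))\<^sup>2"
    by (auto intro!: power_mono norm_sum)
  also have "\<dots> \<le> real (t - s) * (\<Sum>j\<in>{s..<t}. (norm (?v j))\<^sup>2)"
    using sum_squared_le_sum_of_squares[of "\<lambda>j. norm (?v j)" "{s..<t}"] window(3)
    by (simp add: mult.commute)
  also have "\<dots> \<le> real tau * (\<Sum>j\<in>{s..<t}. (norm (?v j))\<^sup>2)"
    using window(2) by (intro mult_right_mono sum_nonneg) auto
  finally show ?thesis by (simp add: s_def)
qed

locale fedsps_params =
  fixes n tau :: nat and F :: "nat \<Rightarrow> 'a::real_inner \<Rightarrow> 'w \<Rightarrow> real" and G :: "nat \<Rightarrow> 'a \<Rightarrow> 'w \<Rightarrow> 'a"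
    and ell :: "nat \<Rightarrow> real" and c gb L :: real and x0 :: 'a
  assumes n_pos: "n \<ge> 1" and tau_pos: "tau \<ge> 1"
    and L_pos: "L > 0" and c_pos: "c > 0" and gb_pos: "gb > 0"
begin

abbreviation iter :: "(nat \<times> nat \<Rightarrow> 'w) \<Rightarrow> nat \<Rightarrow> nat \<Rightarrow> 'a" where
  "iter xi t \<equiv> fedsps n tau F G ell c gb x0 xi t"

lemma consensus_dist_iter_le:
  assumes regular: "\<forall>j<t. \<forall>i<n. regular_sample F G ell L i (xi (j, i))"
  shows "consensus_dist n (iter xi t) \<le> (\<Sum>j\<in>{last_sync tau t..<t}.
      4 * L * gb\<^sup>2 * tau / n * (\<Sum>i<n. F i (avg n (iter xi j)) (xi (j, i)) - ell i)
      + 2 * L\<^sup>2 * gb\<^sup>2 * tau * consensus_dist n (iter xi j))"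
proof -
  define s where "s = last_sync tau t"
  let ?v = "\<lambda>j i. sps_update F G ell c gb i (iter xi j i) (xi (j, i))"
  let ?T = "\<lambda>j i. 2 * (F i (avg n (iter xi j)) (xi (j, i)) - ell i) + L * (norm (iter xi j i - avg n (iter xi j)))\<^sup>2"
  have update_le: "(norm (?v j i))\<^sup>2 \<le> 2 * L * gb\<^sup>2 * ?T j i" if "j \<in> {s..<t}" "i < n" for j i
    using that regular last_sync_le[of tau t] c_pos gb_pos L_pos
    by (intro norm_sps_update_sq_le) (auto simp: s_def)
  have drift: "(norm (iter xi t i - iter xi s 0))\<^sup>2 \<le> real tau * (\<Sum>j\<in>{s..<t}. 2 * L * gb\<^sup>2 * ?T j i)"
    if "i < n" for i
  proof -
    have "(norm (iter xi t i - iter xi s 0))\<^sup>2 \<le> real tau * (\<Sum>j\<in>{s..<t}. (norm (?v j i))\<^sup>2)"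
      unfolding s_def by (rule norm_fedsps_drift_sq_le[OF tau_pos])
    also have "\<dots> \<le> real tau * (\<Sum>j\<in>{s..<t}. 2 * L * gb\<^sup>2 * ?T j i)"
      using update_le that by (intro mult_left_mono sum_mono) auto
    finally show ?thesis .
  qed
  have "consensus_dist n (iter xi t) \<le> (1 / real n) * (\<Sum>i<n. (norm (iter xi t i - iter xi s 0))\<^sup>2)"
    by (rule consensus_dist_le_mean_sq_dist[OF n_pos])
  also have "\<dots> \<le> (1 / real n) * (\<Sum>i<n. real tau * (\<Sum>j\<in>{s..<t}. 2 * L * gb\<^sup>2 * ?T j i))"
    using drift by (intro mult_left_mono sum_mono) auto
  also have "\<dots> = (\<Sum>j\<in>{s..<t}.
      4 * L * gb\<^sup>2 * tau / n * (\<Sum>i<n. F i (avg n (iter xi j)) (xi (j, i)) - ell i)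
      + 2 * L\<^sup>2 * gb\<^sup>2 * tau * consensus_dist n (iter xi j))"
    unfolding consensus_dist_def
    by (simp add: sum_distrib_left sum.distrib sum_subtractf norm_minus_commute algebra_simps power2_eq_square
        sum.swap[of _ "{..<n}" "{s..<t}"] sum_divide_distrib sum_distrib_right)
  finally show ?thesis by (simp add: s_def)
qed

end

lemma last_sync_recurrence:
  fixes R E :: "nat \<Rightarrow> ennreal" and a b B :: ennreal
  assumes step: "\<And>t. R t \<le> (\<Sum>j\<in>{last_sync tau t..<t}. a * E j + b + B * R j)"
    and contraction: "2 * B * of_nat tau \<le> 1" and "tau \<ge> 1"
  shows "R t \<le> 2 * (a * (\<Sum>j\<in>{last_sync tau t..<t}. E j) + of_nat (t - last_sync tau t) * b)"
proof (induction t rule: less_induct)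
  case (less t)
  define s where "s = last_sync tau t"
  define Q where "Q = a * (\<Sum>j\<in>{s..<t}. E j) + of_nat (t - s) * b"
  have R_le: "R j \<le> 2 * Q" if j: "j \<in> {s..<t}" for j
  proof -
    have "R j \<le> 2 * (a * (\<Sum>j\<in>{s..<j}. E j) + of_nat (j - s) * b)"
      using less.IH[of j] j last_sync_eq[of j tau t] by (simp add: s_def)
    also have "\<dots> \<le> 2 * Q" unfolding Q_def
      using j by (intro mult_left_mono add_mono sum_mono2 mult_right_mono) auto
    finally show ?thesis .
  qed
  have "R t \<le> a * (\<Sum>j\<in>{s..<t}. E j) + of_nat (t - s) * b + (\<Sum>j\<in>{s..<t}. B * R j)"
    using step[of t] by (simp add: s_def sum.distrib sum_distrib_left)
  also have "(\<Sum>j\<in>{s..<t}. B * R j) \<le> (\<Sum>j\<in>{s..<t}. B * (2 * Q))"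
    using R_le by (intro sum_mono mult_left_mono) auto
  also have "\<dots> = (2 * B * of_nat (t - s)) * Q"
    by (simp add: mult_ac)
  also have "\<dots> \<le> 1 * Q"
  proof (intro mult_right_mono)
    have "2 * B * of_nat (t - s) \<le> 2 * B * of_nat tau"
      using diff_last_sync_less[OF \<open>tau \<ge> 1\<close>, of t] by (intro mult_left_mono) (auto simp: s_def)
    then show "2 * B * of_nat (t - s) \<le> 1" using contraction by order
  qed simp
  finally show ?case by (simp add: Q_def s_def mult_2 add_ac)
qed

lemma (in product_prob_space) nn_integral_restrict_finite:
  assumes "finite J" "J \<subseteq> I" and g: "g \<in> borel_measurable (PiM J M)"
  shows "(\<integral>\<^sup>+\<omega>. g (restrict \<omega> J) \<partial>PiM I M) = (\<integral>\<^sup>+\<omega>. g \<omega> \<partial>PiM J M)"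
proof -
  have "(\<integral>\<^sup>+\<omega>. g (restrict \<omega> J) \<partial>PiM I M) = (\<integral>\<^sup>+\<omega>. g \<omega> \<partial>distr (PiM I M) (PiM J M) (\<lambda>\<omega>. restrict \<omega> J))"
    using assms by (intro nn_integral_distr[symmetric])
      (auto intro!: measurable_restrict_subset simp del: restrict_apply)
  also have "\<dots> = (\<integral>\<^sup>+\<omega>. g \<omega> \<partial>PiM J M)"
    using assms by (simp add: distr_PiM_restrict_finite)
  finally show ?thesis .
qed

lemma (in product_prob_space) nn_integral_fresh_component:
  assumes J: "finite J" "J \<subseteq> I" and a: "a \<in> I" "a \<notin> J"
    and X[measurable]: "X \<in> measurable (PiM J M) N"
    and f[measurable]: "case_prod f \<in> borel_measurable (N \<Otimes>\<^sub>M M a)"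
  shows "(\<integral>\<^sup>+\<omega>. f (X (restrict \<omega> J)) (\<omega> a) \<partial>PiM I M)
       = (\<integral>\<^sup>+\<omega>. (\<integral>\<^sup>+y. f (X (restrict \<omega> J)) y \<partial>M a) \<partial>PiM I M)"
proof -
  let ?K = "insert a J"
  have h: "(\<lambda>\<omega>. f (X (restrict \<omega> J)) (\<omega> a)) \<in> borel_measurable (PiM ?K M)"
    by (rule measurable_Pair_compose_split[OF f])
       (auto intro!: measurable_compose[OF measurable_restrict_subset X] measurable_component_singleton)
  have "(\<integral>\<^sup>+\<omega>. f (X (restrict \<omega> J)) (\<omega> a) \<partial>PiM I M)
      = (\<integral>\<^sup>+\<omega>. f (X (restrict \<omega> J)) (\<omega> a) \<partial>PiM ?K M)"
    using nn_integral_restrict_finite[OF _ _ h] J a by (simp add: Int_absorb1)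
  also have "\<dots> = (\<integral>\<^sup>+x. (\<integral>\<^sup>+y. f (X (restrict (x(a := y)) J)) y \<partial>M a) \<partial>PiM J M)"
    using product_nn_integral_insert[OF J(1) a(2) h] by simp
  also have "\<dots> = (\<integral>\<^sup>+x. (\<integral>\<^sup>+y. f (X x) y \<partial>M a) \<partial>PiM J M)"
    using a(2) by (intro nn_integral_cong) (simp add: space_PiM restrict_PiE_iff)
  also have "\<dots> = (\<integral>\<^sup>+\<omega>. (\<integral>\<^sup>+y. f (X (restrict \<omega> J)) y \<partial>M a) \<partial>PiM I M)"
    using J by (intro nn_integral_restrict_finite[symmetric]) measurable
  finally show ?thesis .
qed

lemma nn_integral_diff_const_eq:
  assumes "prob_space M" "integrable M f" "AE \<omega> in M. l \<le> f \<omega>"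
  shows "(\<integral>\<^sup>+\<omega>. ennreal (f \<omega> - l) \<partial>M) = ennreal ((\<integral>\<omega>. f \<omega> \<partial>M) - l)"
proof -
  interpret prob_space M by fact
  have "(\<integral>\<^sup>+\<omega>. ennreal (f \<omega> - l) \<partial>M) = ennreal (\<integral>\<omega>. f \<omega> - l \<partial>M)"
    using assms by (intro nn_integral_eq_integral) auto
  then show ?thesis
    using assms by (simp add: Bochner_Integration.integral_diff prob_space)
qed

lemma measurable_sps_update:
  fixes F :: "nat \<Rightarrow> 'a::euclidean_space \<Rightarrow> 'w \<Rightarrow> real" and G :: "nat \<Rightarrow> 'a \<Rightarrow> 'w \<Rightarrow> 'a"
  assumes F: "(\<lambda>(x, xi). F i x xi) \<in> borel_measurable (borel \<Otimes>\<^sub>M N)"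
    and G: "(\<lambda>(x, xi). G i x xi) \<in> borel_measurable (borel \<Otimes>\<^sub>M N)"
    and y: "y \<in> borel_measurable M" and e: "e \<in> measurable M N"
  shows "(\<lambda>\<omega>. sps_update F G ell c gb i (y \<omega>) (e \<omega>)) \<in> borel_measurable M"
proof -
  note [measurable] = measurable_Pair_compose_split[OF F y e] measurable_Pair_compose_split[OF G y e]
  show ?thesis unfolding sps_update_def sps_step_def by measurable
qed

lemma measurable_avg:
  fixes x :: "'b \<Rightarrow> nat \<Rightarrow> 'a::euclidean_space"
  assumes "\<And>k. k < n \<Longrightarrow> (\<lambda>\<omega>. x \<omega> k) \<in> borel_measurable M"
  shows "(\<lambda>\<omega>. avg n (x \<omega>)) \<in> borel_measurable M"
  unfolding avg_def using assms by (intro borel_measurable_scaleR borel_measurable_sum) auto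

lemma measurable_consensus_dist:
  fixes x :: "'b \<Rightarrow> nat \<Rightarrow> 'a::euclidean_space"
  assumes "\<And>k. k < n \<Longrightarrow> (\<lambda>\<omega>. x \<omega> k) \<in> borel_measurable M"
  shows "(\<lambda>\<omega>. consensus_dist n (x \<omega>)) \<in> borel_measurable M"
  unfolding consensus_dist_def using assms measurable_avg[OF assms]
  by (intro borel_measurable_times borel_measurable_sum borel_measurable_power borel_measurable_norm
      borel_measurable_diff) auto

text \<open>The factors of clients \<open>i \<ge> n\<close> never enter the algorithm; a point mass there makes
  every factor a probability space without changing \<open>sample_space\<close>.\<close>
definition sample_law :: "nat \<Rightarrow> (nat \<Rightarrow> 'w measure) \<Rightarrow> nat \<times> nat \<Rightarrow> 'w measure" where
  "sample_law n D p = (if snd p < n then D (snd p) else return (count_space UNIV) undefined)"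

lemma sample_law_eq: "i < n \<Longrightarrow> sample_law n D (j, i) = D i"
  by (simp add: sample_law_def)

lemma prob_space_sample_law: "\<forall>i<n. prob_space (D i) \<Longrightarrow> prob_space (sample_law n D p)"
  by (auto simp: sample_law_def intro!: prob_space_return)

lemma sample_space_eq_PiM_sample_law: "sample_space n D = PiM (UNIV \<times> {..<n}) (sample_law n D)"
  unfolding sample_space_def by (rule PiM_cong) (auto simp: sample_law_def)

lemma measurable_sample:
  "(t, i) \<in> K \<Longrightarrow> i < n \<Longrightarrow> (\<lambda>\<omega>. \<omega> (t, i)) \<in> measurable (PiM K (sample_law n D)) (D i)"
  using measurable_component_singleton[of "(t, i)" K "sample_law n D"] by (simp add: sample_law_eq)

lemma measurable_fedsps:
  fixes F :: "nat \<Rightarrow> 'a::euclidean_space \<Rightarrow> 'w \<Rightarrow> real" and G :: "nat \<Rightarrow> 'a \<Rightarrow> 'w \<Rightarrow> 'a"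
  assumes measF: "\<forall>i<n. (\<lambda>(x, xi). F i x xi) \<in> borel_measurable (borel \<Otimes>\<^sub>M D i)"
    and measG: "\<forall>i<n. (\<lambda>(x, xi). G i x xi) \<in> borel_measurable (borel \<Otimes>\<^sub>M D i)"
    and "{..<t} \<times> {..<n} \<subseteq> K" and "k < n"
  shows "(\<lambda>\<omega>. fedsps n tau F G ell c gb x0 \<omega> t k) \<in> borel_measurable (PiM K (sample_law n D))"
  using assms(3,4)
proof (induction t arbitrary: k)
  case (Suc t)
  have update: "(\<lambda>\<omega>. fedsps n tau F G ell c gb x0 \<omega> t j
      - sps_update F G ell c gb j (fedsps n tau F G ell c gb x0 \<omega> t j) (\<omega> (t, j)))
      \<in> borel_measurable (PiM K (sample_law n D))" if "j < n" for j
    using Suc that measF measG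
    by (intro borel_measurable_diff measurable_sps_update Suc.IH) (auto intro!: measurable_sample)
  show ?case
  proof (cases "tau dvd Suc t")
    case True
    then show ?thesis unfolding fedsps_Suc_sync[OF True]
      using update by (intro borel_measurable_scaleR borel_measurable_sum) auto
  next
    case False
    then show ?thesis unfolding fedsps_Suc_local[OF False]
      using update Suc.prems by auto
  qed
qed simp

locale fedsps_stochastic = fedsps_params n tau F G ell c gb L x0
  for n tau and F :: "nat \<Rightarrow> 'a::euclidean_space \<Rightarrow> 'w \<Rightarrow> real" and G ell c gb L x0 +
  fixes D :: "nat \<Rightarrow> 'w measure" and xstar :: 'a
  assumes prob: "\<forall>i<n. prob_space (D i)"
    and measF: "\<forall>i<n. (\<lambda>(x, xi). F i x xi) \<in> borel_measurable (borel \<Otimes>\<^sub>M D i)"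
    and measG: "\<forall>i<n. (\<lambda>(x, xi). G i x xi) \<in> borel_measurable (borel \<Otimes>\<^sub>M D i)"
    and intF: "\<forall>i<n. \<forall>x. integrable (D i) (F i x)"
    and diffF: "\<forall>i<n. AE xi in D i. \<forall>x. ((\<lambda>y. F i y xi) has_derivative (\<lambda>h. G i x xi \<bullet> h)) (at x)"
    and unbiased: "\<forall>i<n. \<forall>x. (local_obj D F i has_derivative (\<lambda>h. (\<integral>xi. G i x xi \<partial>D i) \<bullet> h)) (at x)"
    and lower: "\<forall>i<n. AE xi in D i. \<forall>x. ell i \<le> F i x xi"
    and smooth: "\<forall>i<n. AE xi in D i. \<forall>x y. norm (G i y xi - G i x xi) \<le> L * norm (x - y)"
    and minimizer: "\<forall>x. global_obj n D F xstar \<le> global_obj n D F x"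
begin

abbreviation \<Omega> :: "(nat \<times> nat \<Rightarrow> 'w) measure" where
  "\<Omega> \<equiv> sample_space n D"

abbreviation expected_consensus :: "nat \<Rightarrow> ennreal" where
  "expected_consensus t \<equiv> \<integral>\<^sup>+\<omega>. ennreal (consensus_dist n (iter \<omega> t)) \<partial>\<Omega>"

abbreviation expected_gap :: "nat \<Rightarrow> ennreal" where
  "expected_gap t \<equiv> \<integral>\<^sup>+\<omega>. ennreal (global_obj n D F (avg n (iter \<omega> t)) - global_obj n D F xstar) \<partial>\<Omega>"

abbreviation \<sigma>\<^sub>f\<^sub>2 :: real where
  "\<sigma>\<^sub>f\<^sub>2 \<equiv> sigma_f2 n D F ell xstar"

lemma product_prob_space_sample_law: "product_prob_space (sample_law n D)"
  using prob by (intro product_prob_spaceI prob_space_sample_law)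

lemma prob_space_\<Omega>: "prob_space \<Omega>"
proof -
  interpret product_prob_space "sample_law n D" "UNIV \<times> {..<n}"
    by (rule product_prob_space_sample_law)
  show ?thesis unfolding sample_space_eq_PiM_sample_law by unfold_locales
qed

lemma measurable_iter: "k < n \<Longrightarrow> (\<lambda>\<omega>. iter \<omega> t k) \<in> borel_measurable \<Omega>"
  unfolding sample_space_eq_PiM_sample_law using measF measG by (intro measurable_fedsps) auto

lemma measurable_avg_iter: "(\<lambda>\<omega>. avg n (iter \<omega> t)) \<in> borel_measurable \<Omega>"
  using measurable_iter by (rule measurable_avg)

lemma measurable_consensus_dist_iter:
  "(\<lambda>\<omega>. consensus_dist n (iter \<omega> t)) \<in> borel_measurable \<Omega>"
  using measurable_iter by (rule measurable_consensus_dist)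

lemma local_obj_ge: "i < n \<Longrightarrow> ell i \<le> local_obj D F i x"
  unfolding local_obj_def using prob intF lower
  by (intro prob_space.integral_ge_const) (auto elim!: AE_mp)

lemma sigma_f2_nonneg: "0 \<le> \<sigma>\<^sub>f\<^sub>2"
  unfolding sigma_f2_def using local_obj_ge by (auto intro!: divide_nonneg_nonneg sum_nonneg)

text \<open>Differentiability of the local objectives is used only to make them Borel measurable.\<close>
lemma borel_measurable_local_obj: "i < n \<Longrightarrow> local_obj D F i \<in> borel_measurable borel"
  using unbiased
  by (intro borel_measurable_continuous_onI continuous_at_imp_continuous_on)
     (auto intro: has_derivative_continuous)

lemma AE_regular_samples: "AE \<omega> in \<Omega>. \<forall>j<t. \<forall>i<n. regular_sample F G ell L i (\<omega> (j, i))"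
proof -
  interpret product_prob_space "sample_law n D" "UNIV \<times> {..<n}"
    by (rule product_prob_space_sample_law)
  have "AE \<omega> in PiM (UNIV \<times> {..<n}) (sample_law n D). regular_sample F G ell L (snd p) (\<omega> p)"
    if p_in: "p \<in> {..<t} \<times> {..<n}" for p
  proof (rule AE_component)
    obtain j i where p: "p = (j, i)" "i < n" using p_in by auto
    have "AE xi in D i. regular_sample F G ell L i xi"
      using p diffF lower smooth by (auto simp: regular_sample_def)
    then show "AE xi in sample_law n D p. regular_sample F G ell L (snd p) xi"
      unfolding p(1) sample_law_eq[OF p(2)] by simp
  qed (use p_in in auto)
  then have "AE \<omega> in \<Omega>. \<forall>p\<in>{..<t} \<times> {..<n}. regular_sample F G ell L (snd p) (\<omega> p)"
    unfolding sample_space_eq_PiM_sample_law by (intro eventually_ball_finite) auto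
  then show ?thesis by (rule AE_mp) auto
qed

lemma measurable_sample_loss:
  assumes "i < n"
  shows "(\<lambda>\<omega>. F i (avg n (iter \<omega> j)) (\<omega> (j, i))) \<in> borel_measurable \<Omega>"
proof (rule measurable_Pair_compose_split[where f="F i"])
  show "(\<lambda>(x, xi). F i x xi) \<in> borel_measurable (borel \<Otimes>\<^sub>M D i)"
    using measF assms by simp
  show "(\<lambda>\<omega>. \<omega> (j, i)) \<in> measurable \<Omega> (D i)"
    unfolding sample_space_eq_PiM_sample_law using assms by (intro measurable_sample) auto
qed (rule measurable_avg_iter)

lemma nn_integral_fresh_sample:
  assumes "i < n"
  shows "(\<integral>\<^sup>+\<omega>. ennreal (F i (avg n (iter \<omega> j)) (\<omega> (j, i)) - ell i) \<partial>\<Omega>)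
       = (\<integral>\<^sup>+\<omega>. ennreal (local_obj D F i (avg n (iter \<omega> j)) - ell i) \<partial>\<Omega>)"
proof -
  interpret product_prob_space "sample_law n D" "UNIV \<times> {..<n}"
    by (rule product_prob_space_sample_law)
  define J where "J = {..<j} \<times> {..<n}"
  define X where "X \<omega> = avg n (iter \<omega> j)" for \<omega>
  have past: "X (restrict \<omega> J) = X \<omega>" for \<omega>
    unfolding X_def by (rule avg_fedsps_cong_samples) (auto simp: J_def)
  have X_meas: "X \<in> borel_measurable (PiM J (sample_law n D))"
    unfolding X_def using measF measG by (intro measurable_avg measurable_fedsps) (auto simp: J_def)
  have "(\<lambda>(x, y). F i x y) \<in> borel_measurable (borel \<Otimes>\<^sub>M sample_law n D (j, i))"
    using measF assms by (simp add: sample_law_eq)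
  then have loss_meas: "(\<lambda>(x, y). ennreal (F i x y - ell i)) \<in> borel_measurable (borel \<Otimes>\<^sub>M sample_law n D (j, i))"
    by measurable
  have "(\<integral>\<^sup>+\<omega>. ennreal (F i (avg n (iter \<omega> j)) (\<omega> (j, i)) - ell i) \<partial>\<Omega>)
      = (\<integral>\<^sup>+\<omega>. ennreal (F i (X (restrict \<omega> J)) (\<omega> (j, i)) - ell i) \<partial>PiM (UNIV \<times> {..<n}) (sample_law n D))"
    unfolding sample_space_eq_PiM_sample_law X_def past[unfolded X_def] ..
  also have "\<dots> = (\<integral>\<^sup>+\<omega>. (\<integral>\<^sup>+y. ennreal (F i (X (restrict \<omega> J)) y - ell i) \<partial>sample_law n D (j, i))
      \<partial>PiM (UNIV \<times> {..<n}) (sample_law n D))"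
    using assms by (intro nn_integral_fresh_component[OF _ _ _ _ X_meas loss_meas]) (auto simp: J_def)
  also have "\<dots> = (\<integral>\<^sup>+\<omega>. ennreal (local_obj D F i (avg n (iter \<omega> j)) - ell i) \<partial>\<Omega>)"
    unfolding sample_law_eq[OF assms] X_def past[unfolded X_def] local_obj_def sample_space_eq_PiM_sample_law
    using prob intF lower assms by (intro nn_integral_cong nn_integral_diff_const_eq) auto
  finally show ?thesis .
qed

lemma sum_local_obj_gap:
  "(\<Sum>i<n. local_obj D F i x - ell i) = real n * (global_obj n D F x - global_obj n D F xstar + \<sigma>\<^sub>f\<^sub>2)"
  using n_pos unfolding global_obj_def sigma_f2_def by (simp add: sum_subtractf algebra_simps)

lemma sum_expected_sample_gap:
  "(\<Sum>i<n. \<integral>\<^sup>+\<omega>. ennreal (F i (avg n (iter \<omega> j)) (\<omega> (j, i)) - ell i) \<partial>\<Omega>)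
     = of_nat n * (expected_gap j + ennreal \<sigma>\<^sub>f\<^sub>2)"
proof -
  interpret prob_space \<Omega> by (rule prob_space_\<Omega>)
  have local_meas: "(\<lambda>\<omega>. local_obj D F i (avg n (iter \<omega> j))) \<in> borel_measurable \<Omega>" if "i < n" for i
    using measurable_comp[OF measurable_avg_iter borel_measurable_local_obj[OF that]] by (simp add: comp_def)
  have gap_meas: "(\<lambda>\<omega>. ennreal (global_obj n D F (avg n (iter \<omega> j)) - global_obj n D F xstar)) \<in> borel_measurable \<Omega>"
    unfolding global_obj_def using local_meas by measurable
  have "(\<Sum>i<n. \<integral>\<^sup>+\<omega>. ennreal (F i (avg n (iter \<omega> j)) (\<omega> (j, i)) - ell i) \<partial>\<Omega>)
      = (\<Sum>i<n. \<integral>\<^sup>+\<omega>. ennreal (local_obj D F i (avg n (iter \<omega> j)) - ell i) \<partial>\<Omega>)"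
    by (simp add: nn_integral_fresh_sample)
  also have "\<dots> = (\<integral>\<^sup>+\<omega>. (\<Sum>i<n. ennreal (local_obj D F i (avg n (iter \<omega> j)) - ell i)) \<partial>\<Omega>)"
    using local_meas by (intro nn_integral_sum[symmetric]) auto
  also have "\<dots> = (\<integral>\<^sup>+\<omega>. of_nat n * ennreal (global_obj n D F (avg n (iter \<omega> j)) - global_obj n D F xstar)
      + of_nat n * ennreal \<sigma>\<^sub>f\<^sub>2 \<partial>\<Omega>)"
  proof (intro nn_integral_cong)
    fix \<omega>
    let ?x = "avg n (iter \<omega> j)"
    have "(\<Sum>i<n. ennreal (local_obj D F i ?x - ell i)) = ennreal (\<Sum>i<n. local_obj D F i ?x - ell i)"
      using local_obj_ge by (intro sum_ennreal) auto
    also have "\<dots> = of_nat n * ennreal (global_obj n D F ?x - global_obj n D F xstar) + of_nat n * ennreal \<sigma>\<^sub>f\<^sub>2"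
      unfolding sum_local_obj_gap using minimizer sigma_f2_nonneg
      by (simp add: ennreal_mult ennreal_plus distrib_left flip: ennreal_of_nat_eq_real_of_nat)
    finally show "(\<Sum>i<n. ennreal (local_obj D F i ?x - ell i))
        = of_nat n * ennreal (global_obj n D F ?x - global_obj n D F xstar) + of_nat n * ennreal \<sigma>\<^sub>f\<^sub>2" .
  qed
  also have "\<dots> = of_nat n * (expected_gap j + ennreal \<sigma>\<^sub>f\<^sub>2)"
    using gap_meas by (simp add: nn_integral_add nn_integral_cmult emeasure_space_1 distrib_left)
  finally show ?thesis .
qed

lemma AE_consensus_dist_iter_le:
  "AE \<omega> in \<Omega>. ennreal (consensus_dist n (iter \<omega> t)) \<le> (\<Sum>j\<in>{last_sync tau t..<t}.
      ennreal (4 * L * gb\<^sup>2 * tau / n) * (\<Sum>i<n. ennreal (F i (avg n (iter \<omega> j)) (\<omega> (j, i)) - ell i))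
      + ennreal (2 * L\<^sup>2 * gb\<^sup>2 * tau) * ennreal (consensus_dist n (iter \<omega> j)))"
  using AE_regular_samples[of t]
proof eventually_elim
  case (elim \<omega>)
  define A where "A = 4 * L * gb\<^sup>2 * tau / n"
  define B where "B = 2 * L\<^sup>2 * gb\<^sup>2 * tau"
  define P where "P j i = F i (avg n (iter \<omega> j)) (\<omega> (j, i)) - ell i" for j i
  define C where "C j = consensus_dist n (iter \<omega> j)" for j
  have "0 \<le> A" "0 \<le> B" "\<And>j. 0 \<le> C j" using L_pos by (simp_all add: A_def B_def C_def consensus_dist_nonneg)
  have P: "0 \<le> P j i" if "j \<in> {last_sync tau t..<t}" "i < n" for j i
    using elim that by (auto simp: P_def regular_sample_def)
  have "ennreal (C t) \<le> ennreal (\<Sum>j\<in>{last_sync tau t..<t}. A * (\<Sum>i<n. P j i) + B * C j)"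
    using consensus_dist_iter_le[OF elim] by (intro ennreal_leI) (simp add: A_def B_def C_def P_def)
  also have "\<dots> = (\<Sum>j\<in>{last_sync tau t..<t}. ennreal (A * (\<Sum>i<n. P j i) + B * C j))"
    using \<open>0 \<le> A\<close> \<open>0 \<le> B\<close> \<open>\<And>j. 0 \<le> C j\<close> P
    by (intro sum_ennreal[symmetric] add_nonneg_nonneg mult_nonneg_nonneg sum_nonneg) auto
  also have "\<dots> = (\<Sum>j\<in>{last_sync tau t..<t}. ennreal A * (\<Sum>i<n. ennreal (P j i)) + ennreal B * ennreal (C j))"
  proof (intro sum.cong refl)
    fix j assume j: "j \<in> {last_sync tau t..<t}"
    then have "(\<Sum>i<n. ennreal (P j i)) = ennreal (\<Sum>i<n. P j i)" and "0 \<le> (\<Sum>i<n. P j i)"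
      using P by (auto intro: sum_ennreal sum_nonneg)
    then show "ennreal (A * (\<Sum>i<n. P j i) + B * C j) = ennreal A * (\<Sum>i<n. ennreal (P j i)) + ennreal B * ennreal (C j)"
      using \<open>0 \<le> A\<close> \<open>0 \<le> B\<close> \<open>\<And>j. 0 \<le> C j\<close> by (simp add: ennreal_plus ennreal_mult)
  qed
  finally show ?case by (simp add: A_def B_def C_def P_def)
qed

lemma expected_consensus_step:
  "expected_consensus t \<le> (\<Sum>j\<in>{last_sync tau t..<t}.
      ennreal (4 * L * gb\<^sup>2 * tau) * expected_gap j + ennreal (4 * L * gb\<^sup>2 * tau) * ennreal \<sigma>\<^sub>f\<^sub>2
      + ennreal (2 * L\<^sup>2 * gb\<^sup>2 * tau) * expected_consensus j)"
proof -
  define A where "A = 4 * L * gb\<^sup>2 * tau / n"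
  define P where "P \<omega> j i = ennreal (F i (avg n (iter \<omega> j)) (\<omega> (j, i)) - ell i)" for \<omega> j i
  have P_meas: "(\<lambda>\<omega>. P \<omega> j i) \<in> borel_measurable \<Omega>" if "i < n" for i j
    using measurable_sample_loss[OF that] unfolding P_def by measurable
  then have sum_P: "(\<integral>\<^sup>+\<omega>. (\<Sum>i<n. P \<omega> j i) \<partial>\<Omega>) = (\<Sum>i<n. \<integral>\<^sup>+\<omega>. P \<omega> j i \<partial>\<Omega>)" for j
    by (intro nn_integral_sum) auto
  have "ennreal A * of_nat n = ennreal (4 * L * gb\<^sup>2 * tau)"
    using L_pos n_pos by (simp add: A_def ennreal_of_nat_eq_real_of_nat flip: ennreal_mult)
  then have scale: "ennreal A * (\<Sum>i<n. \<integral>\<^sup>+\<omega>. P \<omega> j i \<partial>\<Omega>)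
      = ennreal (4 * L * gb\<^sup>2 * tau) * expected_gap j + ennreal (4 * L * gb\<^sup>2 * tau) * ennreal \<sigma>\<^sub>f\<^sub>2" for j
    unfolding P_def sum_expected_sample_gap by (simp add: mult.assoc[symmetric] distrib_left)
  have "expected_consensus t \<le> (\<integral>\<^sup>+\<omega>. (\<Sum>j\<in>{last_sync tau t..<t}.
      ennreal A * (\<Sum>i<n. P \<omega> j i) + ennreal (2 * L\<^sup>2 * gb\<^sup>2 * tau) * ennreal (consensus_dist n (iter \<omega> j))) \<partial>\<Omega>)"
    unfolding A_def P_def by (rule nn_integral_mono_AE[OF AE_consensus_dist_iter_le])
  also have "\<dots> = (\<Sum>j\<in>{last_sync tau t..<t}.
      ennreal A * (\<Sum>i<n. \<integral>\<^sup>+\<omega>. P \<omega> j i \<partial>\<Omega>) + ennreal (2 * L\<^sup>2 * gb\<^sup>2 * tau) * expected_consensus j)"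
    using P_meas measurable_consensus_dist_iter
    by (simp add: sum_P nn_integral_sum nn_integral_add nn_integral_cmult)
  finally show ?thesis unfolding scale .
qed

end

lemma step_size_constants:
  assumes "L > 0" "tau \<ge> 1" "gb \<ge> 0" "gb \<le> 1 / (20 * L * real tau)"
  shows "2 * (2 * L\<^sup>2 * gb\<^sup>2 * tau) * tau \<le> 1" and "2 * (4 * L * gb\<^sup>2 * tau) \<le> 1 / (3 * L * tau)"
proof -
  define q where "q = gb * L * tau"
  have "0 \<le> q" "q \<le> 1 / 20"
    using assms by (simp_all add: q_def field_simps)
  then have q2: "q\<^sup>2 \<le> 1 / 400"
    using power_mono[of q "1 / 20" 2] by (simp add: power_divide)
  moreover have "2 * (2 * L\<^sup>2 * gb\<^sup>2 * tau) * tau = 4 * q\<^sup>2"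
    by (simp add: q_def power2_eq_square)
  ultimately show "2 * (2 * L\<^sup>2 * gb\<^sup>2 * tau) * tau \<le> 1"
    by simp
  have "2 * (4 * L * gb\<^sup>2 * tau) = 8 * q\<^sup>2 / (L * tau)"
    using assms by (simp add: q_def power2_eq_square field_simps)
  also have "\<dots> \<le> 1 / (3 * L * tau)"
    using q2 assms by (simp add: field_simps)
  finally show "2 * (4 * L * gb\<^sup>2 * tau) \<le> 1 / (3 * L * tau)" .
qed

theorem mainTheorem10:
  fixes F :: "nat \<Rightarrow> 'a::euclidean_space \<Rightarrow> 'w \<Rightarrow> real"
    and G :: "nat \<Rightarrow> 'a \<Rightarrow> 'w \<Rightarrow> 'a"
    and D :: "nat \<Rightarrow> 'w measure"
    and ell :: "nat \<Rightarrow> real"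
    and L c gb :: real and x0 xstar :: 'a and n tau t :: nat
  assumes n_pos: "n \<ge> 1" and tau_pos: "tau \<ge> 1"
    and L_pos: "L > 0" and c_pos: "c > 0" and gb_pos: "gb > 0"
    and prob: "\<forall>i<n. prob_space (D i)"
    and measF: "\<forall>i<n. (\<lambda>(x, xi). F i x xi) \<in> borel_measurable (borel \<Otimes>\<^sub>M D i)"
    and measG: "\<forall>i<n. (\<lambda>(x, xi). G i x xi) \<in> borel_measurable (borel \<Otimes>\<^sub>M D i)"
    and intF: "\<forall>i<n. \<forall>x. integrable (D i) (F i x)"
    and intG: "\<forall>i<n. \<forall>x. integrable (D i) (G i x)"
    and diffF: "\<forall>i<n. AE xi in D i. \<forall>x. ((\<lambda>y. F i y xi) has_derivative (\<lambda>h. G i x xi \<bullet> h)) (at x)"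
    and unbiased: "\<forall>i<n. \<forall>x. (local_obj D F i has_derivative (\<lambda>h. (\<integral>xi. G i x xi \<partial>D i) \<bullet> h)) (at x)"
    and lower: "\<forall>i<n. AE xi in D i. \<forall>x. ell i \<le> F i x xi"
    and smooth: "\<forall>i<n. AE xi in D i. \<forall>x y. norm (G i y xi - G i x xi) \<le> L * norm (x - y)"
    and minimizer: "\<forall>x. global_obj n D F xstar \<le> global_obj n D F x"
    and gb_le: "gb \<le> 1 / (20 * L * real tau)"
  shows "(\<integral>\<^sup>+ xi. ennreal (consensus_dist n (fedsps n tau F G ell c gb x0 xi t)) \<partial>sample_space n D)
     \<le> ennreal (1 / (3 * L * real tau)) *
         (\<Sum>j\<in>{last_sync tau t..<t}.
            \<integral>\<^sup>+ xi. ennreal (global_obj n D F (avg n (fedsps n tau F G ell c gb x0 xi j))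
                              - global_obj n D F xstar) \<partial>sample_space n D)
       + ennreal (64 * L * gb\<^sup>2 * real tau * (\<Sum>j\<in>{last_sync tau t..<t}. sigma_f2 n D F ell xstar))"
proof -
  interpret fedsps_stochastic n tau F G ell c gb L x0 D xstar
    using assms by unfold_locales auto
  define s where "s = last_sync tau t"
  define a where "a = 4 * L * gb\<^sup>2 * tau"
  have a: "0 \<le> a" using L_pos by (simp add: a_def)
  note constants = step_size_constants[OF L_pos tau_pos less_imp_le[OF gb_pos] gb_le]
  have contraction: "2 * ennreal (2 * L\<^sup>2 * gb\<^sup>2 * tau) * of_nat tau \<le> 1"
    using constants(1) by (simp add: ennreal_of_nat_eq_real_of_nat flip: ennreal_mult ennreal_mult' ennreal_numeral)
  have "expected_consensus t \<le> 2 * (ennreal a * (\<Sum>j\<in>{s..<t}. expected_gap j) + of_nat (t - s) * (ennreal a * ennreal \<sigma>\<^sub>f\<^sub>2))"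
    unfolding s_def a_def by (rule last_sync_recurrence[OF expected_consensus_step contraction tau_pos])
  also have "\<dots> = ennreal (2 * a) * (\<Sum>j\<in>{s..<t}. expected_gap j) + ennreal (2 * a * (real (t - s) * \<sigma>\<^sub>f\<^sub>2))"
    using a sigma_f2_nonneg
    by (simp add: distrib_left ennreal_mult ennreal_of_nat_eq_real_of_nat mult_ac)
  also have "\<dots> \<le> ennreal (1 / (3 * L * real tau)) * (\<Sum>j\<in>{s..<t}. expected_gap j)
      + ennreal (64 * L * gb\<^sup>2 * real tau * (\<Sum>j\<in>{s..<t}. \<sigma>\<^sub>f\<^sub>2))"
    using constants(2) sigma_f2_nonneg L_pos
    by (intro add_mono mult_right_mono ennreal_leI) (auto simp: a_def)
  finally show ?thesis by (simp add: s_def)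
qed

end
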